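(* Let $m\ge2$ and let $\mathcal{D}^b=(\Omega^b,\mathcal{B}^b)$ be the Boolean quadruple system of order $2^m$, and let $\mathcal{C}^b$ be the set of collinear triples of $\mathcal{D}^b$. Then $(\Omega^b,\mathcal{C}^b)$ is a regular two-graph and $\mathcal{D}^b$ satisfies property $(\triangle)$. Furthermore, for $\infty\in\Omega^b$, $\mathcal{L}_\infty(\mathcal{D}^b)\cong(\mathbb{F}_2)^m$ and $\pi_\infty(\mathcal{D}^b)$ is trivial.
   Context: The Boolean quadruple system of order $2^m$ has point set $\Omega^b=\mathbb{F}_2^m$ and line set $\mathcal{B}^b$ consisting of all $4$-subsets $\{v_1,v_2,v_3,v_4\}$ with $\sum v_i=0$; it is a supersimple $2$-$(2^m,4,2^{m-1}-1)$ design. A collinear triple is a $3$-subset contained in a line. $(\Omega,\mathcal{C})$ is a regular two-graph if it is a $2$-$(n,3,\mu)$ design and every $4$-subset contains $0,2$ or $4$ members of $\mathcal{C}$. Property $(\triangle)$: if $B_1,B_2\in\mathcal{B}$ with $|B_1\cap B_2|=2$ then $B_1\triangle B_2\in\mathcal{B}$. For distinct $a,b$ with lines $\{a,b,a_i,b_i\}$ through them, $[a,b]:=(a,b)\prod_i(a_i,b_i)$, $[a,a]:=1$; products left to right, $[a_0,\dots,a_k]:=[a_0,a_1]\cdots[a_{k-1},a_k]$; $\mathcal{L}_\infty$ = move sequences starting at $\infty$, $\pi_\infty$ = move sequences starting and ending at $\infty$. *)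

theory Defs
  imports "HOL-Analysis.Finite_Cartesian_Product" "HOL-Library.Z2" "HOL-Algebra.Group"
begin

text \<open>Points of the Boolean quadruple system of order 2^m: the vector space F_2^m,
  rendered as bit ^ 'n with CARD('n) = m (bit = the field F_2 of HOL-Library.Z2).\<close>

definition boolean_lines :: "(bit ^ 'n) set set" where
  "boolean_lines = {S. card S = 4 \<and> (\<Sum>v\<in>S. v) = 0}"

definition collinear_triples :: "'a set \<Rightarrow> 'a set set \<Rightarrow> 'a set set" where
  "collinear_triples \<Omega> \<B> = {T. T \<subseteq> \<Omega> \<and> card T = 3 \<and> (\<exists>L\<in>\<B>. T \<subseteq> L)}"

definition design_2_3 :: "'a set \<Rightarrow> 'a set set \<Rightarrow> nat \<Rightarrow> bool" where
  "design_2_3 \<Omega> \<C> \<mu> \<longleftrightarrow>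
     (\<forall>T\<in>\<C>. T \<subseteq> \<Omega> \<and> card T = 3) \<and>
     (\<forall>x\<in>\<Omega>. \<forall>y\<in>\<Omega>. x \<noteq> y \<longrightarrow> card {T\<in>\<C>. {x, y} \<subseteq> T} = \<mu>)"

definition regular_two_graph :: "'a set \<Rightarrow> 'a set set \<Rightarrow> bool" where
  "regular_two_graph \<Omega> \<C> \<longleftrightarrow>
     (\<exists>\<mu>. design_2_3 \<Omega> \<C> \<mu>) \<and>
     (\<forall>F. F \<subseteq> \<Omega> \<longrightarrow> card F = 4 \<longrightarrow> card {T\<in>\<C>. T \<subseteq> F} \<in> {0, 2, 4})"

definition property_triangle :: "'a set set \<Rightarrow> bool" where
  "property_triangle \<B> \<longleftrightarrow>
     (\<forall>B1\<in>\<B>. \<forall>B2\<in>\<B>. card (B1 \<inter> B2) = 2 \<longrightarrow> (B1 - B2) \<union> (B2 - B1) \<in> \<B>)"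

text \<open>The move [a,b] = (a,b) prod_i (a_i,b_i), where {a,b,a_i,b_i} runs over the lines
  through a and b; [a,a] = 1. In a supersimple design these transpositions are disjoint,
  so the product is the permutation below.\<close>
definition move :: "'a set set \<Rightarrow> 'a \<Rightarrow> 'a \<Rightarrow> 'a \<Rightarrow> 'a" where
  "move \<B> a b x =
     (if a = b then x
      else if x = a then b
      else if x = b then a
      else if (\<exists>y. {a, b, x, y} \<in> \<B>) then (THE y. {a, b, x, y} \<in> \<B>)
      else x)"

text \<open>[a_0,...,a_k] = [a_0,a_1][a_1,a_2]...[a_(k-1),a_k], products left to right
  (the left factor is applied first); [a_0] = 1.\<close>
fun move_seq :: "'a set set \<Rightarrow> 'a list \<Rightarrow> 'a \<Rightarrow> 'a" where
  "move_seq \<B> [] = id"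
| "move_seq \<B> [a] = id"
| "move_seq \<B> (a # b # rest) = move_seq \<B> (b # rest) \<circ> move \<B> a b"

definition L_inf :: "'a set \<Rightarrow> 'a set set \<Rightarrow> 'a \<Rightarrow> ('a \<Rightarrow> 'a) set" where
  "L_inf \<Omega> \<B> pinf = {move_seq \<B> (pinf # as) | as. set as \<subseteq> \<Omega>}"

definition pi_inf :: "'a set \<Rightarrow> 'a set set \<Rightarrow> 'a \<Rightarrow> ('a \<Rightarrow> 'a) set" where
  "pi_inf \<Omega> \<B> pinf = {move_seq \<B> (pinf # as) | as. set as \<subseteq> \<Omega> \<and> last (pinf # as) = pinf}"

definition L_inf_struct :: "'a set \<Rightarrow> 'a set set \<Rightarrow> 'a \<Rightarrow> ('a \<Rightarrow> 'a) monoid" where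
  "L_inf_struct \<Omega> \<B> pinf = \<lparr>carrier = L_inf \<Omega> \<B> pinf, mult = (\<lambda>\<sigma> \<tau>. \<tau> \<circ> \<sigma>), one = id\<rparr>"

definition F2_vec_group :: "(bit ^ 'n) monoid" where
  "F2_vec_group = \<lparr>carrier = UNIV, mult = (+), one = 0\<rparr>"

end

theory Submission
  imports Defs
begin

text \<open>Over \<open>\<bbbF>\<^sub>2\<close> a 4-set sums to zero exactly when its fourth point is the sum of the other
  three. Hence any three points lie on a unique line, so the collinear triples form the
  complete (hence regular) two-graph, and the move \<open>[a,b]\<close> is the translation by \<open>a + b\<close>.
  A move sequence starting at \<open>\<infinity>\<close> telescopes to the translation by \<open>\<infinity> + a\<^sub>k\<close>, so
  \<open>\<L>\<^sub>\<infinity>\<close> is the translation group of \<open>\<bbbF>\<^sub>2\<^sup>m\<close> and closed sequences give the identity.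
  Property \<open>(\<triangle>)\<close> holds because in characteristic 2 the sum over a symmetric difference is
  the sum of the two sums.\<close>

lemma bit_add_self [simp]: "(x::bit) + x = 0"
  by (simp flip: mult_2)

lemma bit_vec_add_self [simp]: "(v::bit ^ 'n) + v = 0"
  by (simp add: vec_eq_iff)

text \<open>Needed as a simp rule because \<open>simp\<close> normalises \<open>v + v\<close> to \<open>2 * v\<close>.\<close>

lemma bit_vec_double [simp]: "2 * (v::bit ^ 'n) = 0"
  by (metis mult_2 bit_vec_add_self)

lemma bit_vec_add_self_left [simp]: "(v::bit ^ 'n) + (v + w) = w"
  by (simp flip: add.assoc)

lemma bit_vec_minus [simp]: "- (v::bit ^ 'n) = v"
  using add.inverse_unique[OF bit_vec_add_self] .

lemma bit_vec_add_eq_0_iff [simp]: "(v::bit ^ 'n) + w = 0 \<longleftrightarrow> v = w"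
  by (metis bit_vec_minus eq_neg_iff_add_eq_0)

lemma card_4_distinct:
  assumes "card {a, b, c, d} = 4"
  shows "a \<noteq> b \<and> a \<noteq> c \<and> a \<noteq> d \<and> b \<noteq> c \<and> b \<noteq> d \<and> c \<noteq> d"
proof (rule ccontr)
  assume "\<not> ?thesis"
  then have "card {a, b, c, d} \<le> 3"
    by (auto simp: card_insert_if)
  with assms show False
    by simp
qed

lemma regular_two_graph_complete:
  "regular_two_graph \<Omega> {T. T \<subseteq> \<Omega> \<and> card T = 3}"
proof -
  let ?C = "{T. T \<subseteq> \<Omega> \<and> card T = 3}"
  have "card {T \<in> ?C. {x, y} \<subseteq> T} = card \<Omega> - 2"
    if "x \<in> \<Omega>" "y \<in> \<Omega>" "x \<noteq> y" for x y
  proof -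
    have "{T \<in> ?C. {x, y} \<subseteq> T} = (\<lambda>z. {x, y, z}) ` (\<Omega> - {x, y})"
    proof (intro equalityI subsetI)
      fix T
      assume T: "T \<in> {T \<in> ?C. {x, y} \<subseteq> T}"
      then have "card (T - {x, y}) = 1"
        using \<open>x \<noteq> y\<close> by (simp add: card_Diff_subset card_ge_0_finite)
      then obtain z where z: "T - {x, y} = {z}"
        by (auto simp: card_Suc_eq)
      with T show "T \<in> (\<lambda>z. {x, y, z}) ` (\<Omega> - {x, y})"
        by (intro image_eqI[of _ _ z]) auto
    qed (use that in \<open>auto simp: card_insert_if\<close>)
    moreover have "inj_on (\<lambda>z. {x, y, z}) (\<Omega> - {x, y})"
      by (rule inj_onI) (auto simp: insert_eq_iff)
    ultimately show ?thesis
      using that by (simp add: card_image card_Diff_subset)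
  qed
  moreover have "card {T \<in> ?C. T \<subseteq> F} = 4" if "F \<subseteq> \<Omega>" "card F = 4" for F
  proof -
    have "{T \<in> ?C. T \<subseteq> F} = {T. T \<subseteq> F \<and> card T = 3}"
      using that by auto
    then show ?thesis
      using n_subsets[of F 3] that by (simp add: card_ge_0_finite numeral_eq_Suc)
  qed
  ultimately show ?thesis
    unfolding regular_two_graph_def design_2_3_def by auto
qed

lemma collinear_triples_eq_all_triples:
  assumes "\<And>T. T \<subseteq> \<Omega> \<Longrightarrow> card T = 3 \<Longrightarrow> \<exists>L\<in>\<B>. T \<subseteq> L"
  shows "collinear_triples \<Omega> \<B> = {T. T \<subseteq> \<Omega> \<and> card T = 3}"
  using assms unfolding collinear_triples_def by auto

lemma sum_sym_diff_char_2:
  fixes A B :: "'a::ab_group_add set"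
  assumes "finite A" "finite B" and char_2: "\<And>x::'a. x + x = 0"
  shows "(\<Sum>v\<in>sym_diff A B. v) = (\<Sum>v\<in>A. v) + (\<Sum>v\<in>B. v)"
proof -
  let ?I = "\<Sum>v\<in>A \<inter> B. v"
  have "(\<Sum>v\<in>A. v) + (\<Sum>v\<in>B. v) = (\<Sum>v\<in>A - B. v) + (\<Sum>v\<in>B - A. v) + (?I + ?I)"
    using sum.Int_Diff[OF \<open>finite A\<close>, of "\<lambda>v. v" B] sum.Int_Diff[OF \<open>finite B\<close>, of "\<lambda>v. v" A]
    by (simp add: Int_commute add_ac)
  also have "\<dots> = (\<Sum>v\<in>sym_diff A B. v)"
    using assms by (simp add: sum.union_disjoint Diff_Int_distrib2)
  finally show ?thesis ..
qed

lemma card_sym_diff: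
  assumes "finite A" "finite B"
  shows "card (sym_diff A B) = card A + card B - 2 * card (A \<inter> B)"
proof -
  have "card (sym_diff A B) = card (A - B) + card (B - A)"
    using assms by (intro card_Un_disjoint) auto
  also have "\<dots> = (card A - card (A \<inter> B)) + (card B - card (A \<inter> B))"
    using assms by (simp add: card_Diff_subset_Int Int_commute)
  finally show ?thesis
    using card_mono[OF \<open>finite A\<close>, of "A \<inter> B"] card_mono[OF \<open>finite B\<close>, of "A \<inter> B"] by auto
qed

definition additive_group :: "'a::ab_group_add monoid" where
  "additive_group = \<lparr>carrier = UNIV, mult = (+), one = 0\<rparr>"

definition translation_group :: "('a::ab_group_add \<Rightarrow> 'a) monoid" where
  "translation_group = \<lparr>carrier = range (\<lambda>v x. x + v), mult = (\<lambda>\<sigma> \<tau>. \<tau> \<circ> \<sigma>), one = id\<rparr>"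

lemma group_additive_group: "group (additive_group :: 'a::ab_group_add monoid)"
  by (rule groupI) (auto simp: additive_group_def add.assoc intro: exI[of _ "- x" for x])

lemma translation_comp: "(\<lambda>x. x + w) \<circ> (\<lambda>x. x + v) = (\<lambda>x::'a::ab_group_add. x + (v + w))"
  by (simp add: comp_def add.assoc)

lemma group_translation_group: "group (translation_group :: ('a::ab_group_add \<Rightarrow> 'a) monoid)"
proof (rule groupI)
  show "\<one>\<^bsub>translation_group\<^esub> \<in> carrier (translation_group :: ('a \<Rightarrow> 'a) monoid)"
    using rangeI[of "\<lambda>(v::'a) x. x + v" 0] by (simp add: translation_group_def id_def)
next
  fix \<sigma>
  assume "\<sigma> \<in> carrier (translation_group :: ('a \<Rightarrow> 'a) monoid)"
  then obtain v where \<sigma>: "\<sigma> = (\<lambda>x. x + v)"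
    by (auto simp: translation_group_def)
  define w where "w = - v"
  have "(\<lambda>x. x + w) \<in> carrier (translation_group :: ('a \<Rightarrow> 'a) monoid)"
    by (simp add: translation_group_def)
  moreover have "(\<lambda>x. x + w) \<otimes>\<^bsub>translation_group\<^esub> \<sigma> = \<one>\<^bsub>translation_group\<^esub>"
    by (simp add: translation_group_def \<sigma> w_def comp_def id_def)
  ultimately show
    "\<exists>\<tau>\<in>carrier translation_group. \<tau> \<otimes>\<^bsub>translation_group\<^esub> \<sigma> = \<one>\<^bsub>translation_group\<^esub>"
    by blast
qed (auto simp: translation_group_def translation_comp comp_assoc)

lemma translation_iso:
  "(\<lambda>v x. x + v) \<in> iso additive_group (translation_group :: ('a::ab_group_add \<Rightarrow> 'a) monoid)"
proof (rule isoI)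
  show "(\<lambda>v x. x + v) \<in> hom additive_group (translation_group :: ('a \<Rightarrow> 'a) monoid)"
    by (rule homI) (auto simp: additive_group_def translation_group_def translation_comp)
  have "inj (\<lambda>(v::'a) x. x + v)"
    by (rule injI) (metis add_0)
  then show "bij_betw (\<lambda>v x. x + v) (carrier additive_group)
      (carrier (translation_group :: ('a \<Rightarrow> 'a) monoid))"
    by (simp add: additive_group_def translation_group_def bij_betw_def)
qed

lemma insert_in_boolean_lines_iff:
  assumes "a \<noteq> b" "c \<noteq> a" "c \<noteq> b"
  shows "{a, b, c, d} \<in> (boolean_lines :: (bit ^ 'n) set set) \<longleftrightarrow> d = a + b + c"
proof
  assume "{a, b, c, d} \<in> (boolean_lines :: (bit ^ 'n) set set)"
  then have card: "card {a, b, c, d} = 4" and "(\<Sum>v\<in>{a, b, c, d}. v) = 0"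
    by (auto simp: boolean_lines_def)
  moreover have "(\<Sum>v\<in>{a, b, c, d}. v) = (a + b + c) + d"
    using card_4_distinct[OF card] by (simp add: add.assoc)
  ultimately show "d = a + b + c"
    by (metis bit_vec_add_eq_0_iff)
next
  assume d: "d = a + b + c"
  have "d \<noteq> a" "d \<noteq> b" "d \<noteq> c"
    using assms unfolding d
    by (metis add.commute add.left_commute add_cancel_left_right bit_vec_add_eq_0_iff)+
  with assms have "card {a, b, c, d} = 4"
    by (simp add: card_insert_if)
  moreover have "(\<Sum>v\<in>{a, b, c, d}. v) = 0"
    using assms \<open>d \<noteq> a\<close> \<open>d \<noteq> b\<close> \<open>d \<noteq> c\<close> d by (simp add: add_ac)
  ultimately show "{a, b, c, d} \<in> boolean_lines"
    by (simp add: boolean_lines_def)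
qed

lemma boolean_lines_cover_triples:
  assumes "card (T :: (bit ^ 'n) set) = 3"
  shows "\<exists>L\<in>boolean_lines. T \<subseteq> L"
proof -
  obtain a b c where T: "T = {a, b, c}" "a \<noteq> b" "a \<noteq> c" "b \<noteq> c"
    using assms by (auto simp: card_3_iff)
  then have "{a, b, c, a + b + c} \<in> (boolean_lines :: (bit ^ 'n) set set)"
    by (simp add: insert_in_boolean_lines_iff)
  with T show ?thesis
    by blast
qed

lemma property_triangle_boolean_lines: "property_triangle (boolean_lines :: (bit ^ 'n) set set)"
  unfolding property_triangle_def
proof (intro ballI impI)
  fix B1 B2 :: "(bit ^ 'n) set"
  assume "B1 \<in> boolean_lines" "B2 \<in> boolean_lines" "card (B1 \<inter> B2) = 2"
  then have "card B1 = 4" "card B2 = 4" "finite B1" "finite B2"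
    "(\<Sum>v\<in>B1. v) = 0" "(\<Sum>v\<in>B2. v) = 0"
    by (auto simp: boolean_lines_def card_ge_0_finite)
  with \<open>card (B1 \<inter> B2) = 2\<close> show "(B1 - B2) \<union> (B2 - B1) \<in> boolean_lines"
    by (simp add: boolean_lines_def card_sym_diff sum_sym_diff_char_2)
qed

lemma move_boolean_lines: "move (boolean_lines :: (bit ^ 'n) set set) a b = (\<lambda>x. x + (a + b))"
proof
  fix x :: "bit ^ 'n"
  show "move boolean_lines a b x = x + (a + b)"
  proof (cases "a = b \<or> x = a \<or> x = b")
    case True
    then show ?thesis
      by (auto simp: move_def add.left_commute)
  next
    case False
    then have "{a, b, x, y} \<in> (boolean_lines :: (bit ^ 'n) set set) \<longleftrightarrow> y = a + b + x" for y
      by (intro insert_in_boolean_lines_iff) auto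
    with False show ?thesis
      by (simp add: move_def add_ac)
  qed
qed

lemma move_seq_boolean_lines:
  "move_seq (boolean_lines :: (bit ^ 'n) set set) (a # as) = (\<lambda>x. x + (a + last (a # as)))"
proof (induction as arbitrary: a)
  case Nil
  show ?case
    by (simp add: id_def)
next
  case (Cons b as)
  then show ?case
    by (simp add: move_boolean_lines comp_def add.assoc)
qed

lemma L_inf_boolean_lines:
  "L_inf UNIV (boolean_lines :: (bit ^ 'n) set set) p = range (\<lambda>v x. x + v)"
proof (intro equalityI subsetI)
  fix \<sigma>
  assume "\<sigma> \<in> L_inf UNIV (boolean_lines :: (bit ^ 'n) set set) p"
  then obtain as where "\<sigma> = move_seq (boolean_lines :: (bit ^ 'n) set set) (p # as)"
    unfolding L_inf_def by blast
  then show "\<sigma> \<in> range (\<lambda>v x. x + v)"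
    by (simp add: move_seq_boolean_lines)
next
  fix \<sigma>
  assume "\<sigma> \<in> range (\<lambda>v (x :: bit ^ 'n). x + v)"
  then obtain v where "\<sigma> = (\<lambda>x. x + v)"
    by blast
  also have "\<dots> = move_seq boolean_lines [p, p + v]"
    by (simp add: move_boolean_lines)
  finally show "\<sigma> \<in> L_inf UNIV boolean_lines p"
    unfolding L_inf_def by blast
qed

lemma pi_inf_boolean_lines: "pi_inf UNIV (boolean_lines :: (bit ^ 'n) set set) p = {id}"
proof -
  have "move_seq (boolean_lines :: (bit ^ 'n) set set) (p # as) = id" if "last (p # as) = p" for as
    using that by (simp add: move_seq_boolean_lines id_def)
  moreover have "move_seq (boolean_lines :: (bit ^ 'n) set set) [p] = id"
    by simp
  ultimately show ?thesis
    unfolding pi_inf_def by fastforce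
qed

lemma L_inf_struct_boolean_lines:
  "L_inf_struct UNIV (boolean_lines :: (bit ^ 'n) set set) p = translation_group"
  by (simp add: L_inf_struct_def translation_group_def L_inf_boolean_lines)

theorem lemma2p8:
  fixes pinf :: "bit ^ 'n"
  assumes "CARD('n) \<ge> 2"
  shows "regular_two_graph UNIV (collinear_triples UNIV (boolean_lines :: (bit ^ 'n) set set))
    \<and> property_triangle (boolean_lines :: (bit ^ 'n) set set)
    \<and> group (L_inf_struct UNIV boolean_lines pinf)
    \<and> L_inf_struct UNIV boolean_lines pinf \<cong> (F2_vec_group :: (bit ^ 'n) monoid)
    \<and> pi_inf UNIV boolean_lines pinf = {id}"
proof (intro conjI)
  have "collinear_triples UNIV (boolean_lines :: (bit ^ 'n) set set)
      = {T. T \<subseteq> UNIV \<and> card T = 3}"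
    by (intro collinear_triples_eq_all_triples boolean_lines_cover_triples)
  then show "regular_two_graph UNIV (collinear_triples UNIV (boolean_lines :: (bit ^ 'n) set set))"
    by (simp only: regular_two_graph_complete)
  show "group (L_inf_struct UNIV boolean_lines pinf)"
    unfolding L_inf_struct_boolean_lines by (rule group_translation_group)
  have "F2_vec_group = (additive_group :: (bit ^ 'n) monoid)"
    by (simp add: F2_vec_group_def additive_group_def)
  then show "L_inf_struct UNIV boolean_lines pinf \<cong> (F2_vec_group :: (bit ^ 'n) monoid)"
    unfolding L_inf_struct_boolean_lines
    using group.iso_sym[OF group_additive_group is_isoI[OF translation_iso]] by simp
qed (simp_all add: property_triangle_boolean_lines pi_inf_boolean_lines)

end
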